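(* Let $\Sigma_1 \subset \mathbb{R}^{N_1}$ and $\Sigma_2 \subset \mathbb{R}^{N_2}$ be nonempty, and let $\Sigma = \Sigma_1 \times \Sigma_2 \subset \mathbb{R}^{N_1}\times\mathbb{R}^{N_2}$, equipped with the norm $\|(x_1,x_2)\|_2 = \sqrt{\|x_1\|_2^2 + \|x_2\|_2^2}$. For $i = 1,2$ let $P_i$ be a generalized projection onto $\Sigma_i$ minimizing $\beta_{\Sigma_i}$ over all generalized projections onto $\Sigma_i$, with $\beta_{\Sigma_i}(P_i) < \infty$. Define $P_\Sigma(z_1, z_2) = (P_1(z_1), P_2(z_2))$ (i.e., the set $P_1(z_1)\times P_2(z_2)$). Then $P_\Sigma$ minimizes $\beta_\Sigma$ over all generalized projections onto $\Sigma$.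
   Context: A (set-valued) generalized projection onto $\Sigma \subset \mathbb{R}^N$ is a map $P$ assigning to each $z \in \mathbb{R}^N$ a nonempty subset $P(z) \subset \Sigma$. Restricted Lipschitz property: $P$ has the restricted $\beta$-Lipschitz property with respect to $\Sigma$ if for all $z \in \mathbb{R}^N$, all $x \in \Sigma$ and all $u \in P(z)$, $\|u - x\|_2 \le \beta\|z - x\|_2$; $\beta_\Sigma(P)$ denotes the smallest such $\beta$ (possibly $+\infty$). *)

theory Defs
  imports "HOL-Analysis.Analysis"
begin

definition gen_proj :: "'a set \<Rightarrow> ('a \<Rightarrow> 'a set) \<Rightarrow> bool" where
  "gen_proj S P \<longleftrightarrow> (\<forall>z. P z \<noteq> {} \<and> P z \<subseteq> S)"

definition restricted_lipschitz ::
  "'a::real_normed_vector set \<Rightarrow> ('a \<Rightarrow> 'a set) \<Rightarrow> real \<Rightarrow> bool" where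
  "restricted_lipschitz S P \<beta> \<longleftrightarrow>
     (\<forall>z. \<forall>x\<in>S. \<forall>u\<in>P z. norm (u - x) \<le> \<beta> * norm (z - x))"

definition beta_Sigma :: "'a::real_normed_vector set \<Rightarrow> ('a \<Rightarrow> 'a set) \<Rightarrow> ereal" where
  "beta_Sigma S P = Inf {ereal \<beta> | \<beta>. 0 \<le> \<beta> \<and> restricted_lipschitz S P \<beta>}"

definition optimal_proj :: "'a::real_normed_vector set \<Rightarrow> ('a \<Rightarrow> 'a set) \<Rightarrow> bool" where
  "optimal_proj S P \<longleftrightarrow> gen_proj S P \<and> (\<forall>Q. gen_proj S Q \<longrightarrow> beta_Sigma S P \<le> beta_Sigma S Q)"

end

theory Submission
  imports Defs
begin

text \<open>Restricting a projection onto \<open>S1 \<times> S2\<close> to a horizontal (resp. vertical) line through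
  a point of \<open>S1 \<times> S2\<close> and projecting to the first (resp. second) factor yields a projection
  onto \<open>S1\<close> (resp. \<open>S2\<close>) with no worse Lipschitz constant, because the norm of a pair
  dominates the norms of its components. Hence no projection onto the product beats
  \<open>max \<beta>\<^sub>1 \<beta>\<^sub>2\<close>, and the product of optimal projections attains this bound since the
  product norm is the Euclidean norm of the pair of component norms.\<close>

definition prod_proj :: "('a \<Rightarrow> 'a set) \<Rightarrow> ('b \<Rightarrow> 'b set) \<Rightarrow> 'a \<times> 'b \<Rightarrow> ('a \<times> 'b) set" where
  "prod_proj P1 P2 = (\<lambda>(z1, z2). P1 z1 \<times> P2 z2)"

definition fst_slice :: "('a \<times> 'b \<Rightarrow> ('a \<times> 'b) set) \<Rightarrow> 'b \<Rightarrow> 'a \<Rightarrow> 'a set" where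
  "fst_slice Q b = (\<lambda>z. fst ` Q (z, b))"

definition snd_slice :: "('a \<times> 'b \<Rightarrow> ('a \<times> 'b) set) \<Rightarrow> 'a \<Rightarrow> 'b \<Rightarrow> 'b set" where
  "snd_slice Q a = (\<lambda>z. snd ` Q (a, z))"

lemma restricted_lipschitz_mono:
  assumes "restricted_lipschitz S P b" and "b \<le> c"
  shows "restricted_lipschitz S P c"
  using assms unfolding restricted_lipschitz_def
  by (meson mult_right_mono norm_ge_zero order_trans)

lemma restricted_lipschitz_if_beta_Sigma_less:
  assumes "beta_Sigma S P < ereal c"
  shows "0 \<le> c" and "restricted_lipschitz S P c"
proof -
  obtain b where "0 \<le> b" "restricted_lipschitz S P b" "b < c"
    using assms unfolding beta_Sigma_def by (auto simp: Inf_less_iff)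
  then show "0 \<le> c" and "restricted_lipschitz S P c"
    using restricted_lipschitz_mono[of S P b c] by auto
qed

lemma beta_Sigma_le:
  assumes "0 \<le> c" and "restricted_lipschitz S P c"
  shows "beta_Sigma S P \<le> ereal c"
  unfolding beta_Sigma_def using assms by (intro Inf_lower) auto

lemma beta_Sigma_mono:
  assumes "\<And>c. restricted_lipschitz S P c \<Longrightarrow> restricted_lipschitz S' P' c"
  shows "beta_Sigma S' P' \<le> beta_Sigma S P"
  unfolding beta_Sigma_def using assms by (intro Inf_superset_mono) auto

lemma norm_Pair_le_scaled:
  assumes "norm a \<le> c * norm b" and "norm a' \<le> c * norm b'" and "0 \<le> c"
  shows "norm (a, a') \<le> c * norm (b, b')"
proof -
  have "(norm a)\<^sup>2 + (norm a')\<^sup>2 \<le> (c * norm b)\<^sup>2 + (c * norm b')\<^sup>2"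
    using assms by (intro add_mono power_mono) auto
  then have "sqrt ((norm a)\<^sup>2 + (norm a')\<^sup>2) \<le> sqrt (c\<^sup>2 * ((norm b)\<^sup>2 + (norm b')\<^sup>2))"
    by (simp add: power_mult_distrib algebra_simps)
  also have "\<dots> = c * sqrt ((norm b)\<^sup>2 + (norm b')\<^sup>2)"
    using assms(3) by (simp add: real_sqrt_mult)
  finally show ?thesis by (simp add: norm_Pair)
qed

lemma gen_proj_prod:
  assumes "gen_proj S1 P1" and "gen_proj S2 P2"
  shows "gen_proj (S1 \<times> S2) (prod_proj P1 P2)"
  using assms unfolding gen_proj_def prod_proj_def by auto

lemma restricted_lipschitz_prod:
  assumes "restricted_lipschitz S1 P1 c" and "restricted_lipschitz S2 P2 c" and "0 \<le> c"
  shows "restricted_lipschitz (S1 \<times> S2) (prod_proj P1 P2) c"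
  unfolding restricted_lipschitz_def
proof (intro allI ballI)
  fix z x u
  assume "x \<in> S1 \<times> S2" and "u \<in> prod_proj P1 P2 z"
  then obtain z1 z2 x1 x2 u1 u2 where z: "z = (z1, z2)" "x = (x1, x2)" "u = (u1, u2)"
    and mem: "x1 \<in> S1" "x2 \<in> S2" "u1 \<in> P1 z1" "u2 \<in> P2 z2"
    unfolding prod_proj_def by (cases z, cases x, cases u) auto
  have "norm (u1 - x1) \<le> c * norm (z1 - x1)" and "norm (u2 - x2) \<le> c * norm (z2 - x2)"
    using assms(1,2) mem unfolding restricted_lipschitz_def by blast+
  then show "norm (u - x) \<le> c * norm (z - x)"
    using z assms(3) by (simp add: norm_Pair_le_scaled)
qed

lemma beta_Sigma_prod_le:
  "beta_Sigma (S1 \<times> S2) (prod_proj P1 P2) \<le> max (beta_Sigma S1 P1) (beta_Sigma S2 P2)"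
proof (rule dense_ge)
  fix w
  assume less: "max (beta_Sigma S1 P1) (beta_Sigma S2 P2) < w"
  show "beta_Sigma (S1 \<times> S2) (prod_proj P1 P2) \<le> w"
  proof (cases w)
    case (real c)
    then have "beta_Sigma S1 P1 < ereal c" and "beta_Sigma S2 P2 < ereal c"
      using less by auto
    then show ?thesis
      using real restricted_lipschitz_if_beta_Sigma_less restricted_lipschitz_prod beta_Sigma_le
      by metis
  qed (use less in auto)
qed

lemma gen_proj_fst_slice:
  assumes "gen_proj (S1 \<times> S2) Q"
  shows "gen_proj S1 (fst_slice Q b)"
  using assms unfolding gen_proj_def fst_slice_def by fastforce

lemma gen_proj_snd_slice:
  assumes "gen_proj (S1 \<times> S2) Q"
  shows "gen_proj S2 (snd_slice Q a)"
  using assms unfolding gen_proj_def snd_slice_def by fastforce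

lemma restricted_lipschitz_fst_slice:
  assumes "restricted_lipschitz (S1 \<times> S2) Q c" and "b \<in> S2"
  shows "restricted_lipschitz S1 (fst_slice Q b) c"
  unfolding restricted_lipschitz_def
proof (intro allI ballI)
  fix z x u
  assume "x \<in> S1" and "u \<in> fst_slice Q b z"
  then obtain v where v: "v \<in> Q (z, b)" and u: "u = fst v"
    unfolding fst_slice_def by auto
  have "norm (u - x) \<le> norm (v - (x, b))"
    using u by (cases v) (simp add: norm_Pair)
  also have "\<dots> \<le> c * norm ((z, b) - (x, b))"
    using assms \<open>x \<in> S1\<close> v unfolding restricted_lipschitz_def by blast
  finally show "norm (u - x) \<le> c * norm (z - x)" by simp
qed

lemma restricted_lipschitz_snd_slice:
  assumes "restricted_lipschitz (S1 \<times> S2) Q c" and "a \<in> S1"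
  shows "restricted_lipschitz S2 (snd_slice Q a) c"
  unfolding restricted_lipschitz_def
proof (intro allI ballI)
  fix z x u
  assume "x \<in> S2" and "u \<in> snd_slice Q a z"
  then obtain v where v: "v \<in> Q (a, z)" and u: "u = snd v"
    unfolding snd_slice_def by auto
  have "norm (u - x) \<le> norm (v - (a, x))"
    using u by (cases v) (simp add: norm_Pair)
  also have "\<dots> \<le> c * norm ((a, z) - (a, x))"
    using assms \<open>x \<in> S2\<close> v unfolding restricted_lipschitz_def by blast
  finally show "norm (u - x) \<le> c * norm (z - x)" by simp
qed

lemma optimal_proj_le_beta_Sigma_prod:
  assumes "S1 \<noteq> {}" and "S2 \<noteq> {}" and "optimal_proj S1 P1" and "optimal_proj S2 P2"
    and "gen_proj (S1 \<times> S2) Q"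
  shows "max (beta_Sigma S1 P1) (beta_Sigma S2 P2) \<le> beta_Sigma (S1 \<times> S2) Q"
proof -
  obtain a b where "a \<in> S1" and "b \<in> S2"
    using assms(1,2) by blast
  have "beta_Sigma S1 P1 \<le> beta_Sigma S1 (fst_slice Q b)"
    using assms(3,5) gen_proj_fst_slice unfolding optimal_proj_def by metis
  also have "\<dots> \<le> beta_Sigma (S1 \<times> S2) Q"
    using \<open>b \<in> S2\<close> by (blast intro: beta_Sigma_mono restricted_lipschitz_fst_slice)
  finally have "beta_Sigma S1 P1 \<le> beta_Sigma (S1 \<times> S2) Q" .
  moreover have "beta_Sigma S2 P2 \<le> beta_Sigma S2 (snd_slice Q a)"
    using assms(4,5) gen_proj_snd_slice unfolding optimal_proj_def by metis
  moreover have "\<dots> \<le> beta_Sigma (S1 \<times> S2) Q"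
    using \<open>a \<in> S1\<close> by (blast intro: beta_Sigma_mono restricted_lipschitz_snd_slice)
  ultimately show ?thesis by simp
qed

lemma optimal_proj_prod:
  assumes "S1 \<noteq> {}" and "S2 \<noteq> {}" and "optimal_proj S1 P1" and "optimal_proj S2 P2"
  shows "optimal_proj (S1 \<times> S2) (prod_proj P1 P2)"
  unfolding optimal_proj_def
proof (intro conjI allI impI)
  show "gen_proj (S1 \<times> S2) (prod_proj P1 P2)"
    using assms(3,4) gen_proj_prod unfolding optimal_proj_def by blast
next
  fix Q
  assume "gen_proj (S1 \<times> S2) Q"
  then show "beta_Sigma (S1 \<times> S2) (prod_proj P1 P2) \<le> beta_Sigma (S1 \<times> S2) Q"
    using beta_Sigma_prod_le optimal_proj_le_beta_Sigma_prod[OF assms] order_trans by blast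
qed

theorem lemma2:
  fixes S1 :: "(real ^ 'n1) set" and S2 :: "(real ^ 'n2) set"
    and P1 :: "real ^ 'n1 \<Rightarrow> (real ^ 'n1) set"
    and P2 :: "real ^ 'n2 \<Rightarrow> (real ^ 'n2) set"
  assumes "S1 \<noteq> {}" and "S2 \<noteq> {}"
    and "optimal_proj S1 P1" and "optimal_proj S2 P2"
    and "beta_Sigma S1 P1 < \<infinity>" and "beta_Sigma S2 P2 < \<infinity>"
  shows "optimal_proj (S1 \<times> S2) (\<lambda>(z1, z2). P1 z1 \<times> P2 z2)"
  using optimal_proj_prod[OF assms(1-4)] unfolding prod_proj_def .

end
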